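(* Let $(\mathbb{F}(\alpha,\beta),\sigma)$ be a bivariate difference field extension of a difference field $(\mathbb{F},\sigma)$, and let $g\in\mathbb{F}(\alpha,\beta)$ be a nonzero rational function. Suppose $$\frac{\sigma g}{g}=\frac{p}{q},$$ where $p,q\in\mathbb{F}[\alpha,\beta]$ are nonzero polynomials with $\gcd(p,q)=1$. Then either $p,q\in\mathbb{F}$, or $\mathrm{Spr}_\sigma(p,q)\cup\mathrm{Spr}_\sigma(q,p)\neq\emptyset$.
   Context: A bivariate difference field extension $(\mathbb{F}(\alpha,\beta),\sigma)$ of a difference field $(\mathbb{F},\sigma)$ is the rational function field $\mathbb{F}(\alpha,\beta)$ in two algebraically independent transcendental elements $\alpha,\beta$ over $\mathbb{F}$, together with an automorphism $\sigma$ of $\mathbb{F}(\alpha,\beta)$ extending $\sigma$ on $\mathbb{F}$ and satisfying $\sigma(\alpha)=\beta$, $\sigma(\beta)=u\alpha+v\beta$ with $v\in\mathbb{F}$, $u\in\mathbb{F}\setminus\{0\}$. $\deg$ denotes total degree in $\alpha,\beta$. For nonzero $p,q\in\mathbb{F}[\alpha,\beta]$, the spread is $\mathrm{Spr}_\sigma(p,q)=\{m\in\mathbb{N} : \deg(\gcd(p,\sigma^m q))>0\}$. *)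

theory Defs
  imports "HOL-Computational_Algebra.Computational_Algebra"
begin

text \<open>Bivariate polynomials F[alpha,beta] are modelled as 'a poly poly:
  the outer variable is beta, the inner (coefficient) variable is alpha.
  Rational functions F(alpha,beta) are the fraction field 'a poly poly fract.\<close>

definition var_alpha :: "'a::field_gcd poly poly" where
  "var_alpha = [:[:0, 1:]:]"

definition var_beta :: "'a::field_gcd poly poly" where
  "var_beta = [:0, 1:]"

definition const2 :: "'a::field_gcd \<Rightarrow> 'a poly poly" where
  "const2 c = [:[:c:]:]"

definition tdeg :: "'a::field_gcd poly poly \<Rightarrow> nat" where
  "tdeg f = Max {degree (coeff f j) + j | j. j \<le> degree f \<and> coeff f j \<noteq> 0} "

text \<open>The automorphism sigma on F[alpha,beta]: apply s to the coefficients,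
  and substitute alpha := beta, beta := u*alpha + v*beta.\<close>
definition sigma_pol :: "('a::field_gcd \<Rightarrow> 'a) \<Rightarrow> 'a \<Rightarrow> 'a \<Rightarrow> 'a poly poly \<Rightarrow> 'a poly poly" where
  "sigma_pol s u v f =
     (\<Sum>j\<le>degree f. (\<Sum>i\<le>degree (coeff f j).
         const2 (s (coeff (coeff f j) i)) * var_beta ^ i)
       * (const2 u * var_alpha + const2 v * var_beta) ^ j)"

definition sigma_rat :: "('a::field_gcd \<Rightarrow> 'a) \<Rightarrow> 'a \<Rightarrow> 'a \<Rightarrow> 'a poly poly fract \<Rightarrow> 'a poly poly fract" where
  "sigma_rat s u v g =
     (let (a, b) = (SOME (a, b). b \<noteq> 0 \<and> g = Fract a b)
      in Fract (sigma_pol s u v a) (sigma_pol s u v b))"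

definition field_aut :: "('a::field_gcd \<Rightarrow> 'a) \<Rightarrow> bool" where
  "field_aut s \<longleftrightarrow> bij s \<and> (\<forall>x y. s (x + y) = s x + s y) \<and>
     (\<forall>x y. s (x * y) = s x * s y) \<and> s 1 = 1"

definition spread :: "('a::field_gcd \<Rightarrow> 'a) \<Rightarrow> 'a \<Rightarrow> 'a \<Rightarrow> 'a poly poly \<Rightarrow> 'a poly poly \<Rightarrow> nat set" where
  "spread s u v p q = {m. tdeg (gcd p ((sigma_pol s u v ^^ m) q)) > 0}"

end

theory Submission
  imports Defs
begin

text \<open>Write \<open>g = a / b\<close> and put \<open>P\<^sub>N = \<Prod>i<N. \<sigma>\<^sup>i p\<close>, \<open>Q\<^sub>N = \<Prod>i<N. \<sigma>\<^sup>i q\<close>.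
  The relation \<open>\<sigma> a * b * q = p * \<sigma> b * a\<close> telescopes to
  \<open>\<sigma>\<^sup>N a * b * Q\<^sub>N = P\<^sub>N * \<sigma>\<^sup>N b * a\<close>. If both spreads are empty, every shift of \<open>p\<close>
  is coprime to every shift of \<open>q\<close>, so \<open>P\<^sub>N\<close> divides \<open>\<sigma>\<^sup>N a * b\<close>. The substitution
  \<open>\<sigma>\<close> is a ring automorphism of \<open>F[\<alpha>,\<beta>]\<close>, hence preserves the number \<open>\<Omega>\<close> of prime
  factors counted with multiplicity, and therefore \<open>N * \<Omega> p \<le> \<Omega> a + \<Omega> b\<close> for every \<open>N\<close>.
  So \<open>\<Omega> p = 0\<close>, and symmetrically \<open>\<Omega> q = 0\<close>: both are nonzero constants.\<close>

locale ring_hom =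
  fixes h :: "'a::comm_ring_1 \<Rightarrow> 'b::comm_ring_1"
  assumes hom_add: "h (x + y) = h x + h y"
    and hom_mult: "h (x * y) = h x * h y"
    and hom_one: "h 1 = 1"
begin

lemma hom_zero: "h 0 = 0"
  using hom_add[of 0 0] by simp

lemma hom_sum: "h (sum f A) = (\<Sum>x\<in>A. h (f x))"
  by (induction A rule: infinite_finite_induct) (simp_all add: hom_zero hom_add)

lemma hom_power: "h (x ^ n) = h x ^ n"
  by (induction n) (simp_all add: hom_one hom_mult)

lemma hom_dvd: "x dvd y \<Longrightarrow> h x dvd h y"
  by (elim dvdE) (simp add: hom_mult)

end

lemma ring_hom_id: "ring_hom id"
  by unfold_locales simp_all

lemma ring_hom_comp: "ring_hom f \<Longrightarrow> ring_hom g \<Longrightarrow> ring_hom (f \<circ> g)"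
  by (simp add: ring_hom_def)

lemma ring_hom_poly: "ring_hom (\<lambda>p. poly p x)"
  by unfold_locales simp_all

lemma ring_hom_map_poly:
  assumes "ring_hom h"
  shows "ring_hom (map_poly h)"
proof -
  interpret ring_hom h by fact
  show ?thesis
    by unfold_locales
      (simp_all add: poly_eq_iff coeff_map_poly hom_zero hom_add hom_one hom_mult hom_sum coeff_mult)
qed

lemma ring_hom_inv:
  assumes "ring_hom h" "bij h"
  shows "ring_hom (inv h)"
proof -
  interpret ring_hom h by fact
  have "inj h" using \<open>bij h\<close> by (rule bij_is_inj)
  moreover have [simp]: "h (inv h x) = x" for x
    using \<open>bij h\<close> by (simp add: bij_is_surj surj_f_inv_f)
  ultimately show ?thesis
    by unfold_locales (simp_all add: injD hom_add hom_mult hom_one)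
qed

locale ring_aut = ring_hom h for h :: "'a::factorial_ring_gcd \<Rightarrow> 'a" +
  assumes bij: "bij h"
begin

lemma inv_h_h [simp]: "inv h (h x) = x"
  using bij by (simp add: bij_is_inj)

lemma h_inv_h [simp]: "h (inv h x) = x"
  using bij by (simp add: bij_is_surj surj_f_inv_f)

sublocale inv: ring_hom "inv h"
  using ring_hom_axioms bij by (rule ring_hom_inv)

lemma dvd_iff [simp]: "h x dvd h y \<longleftrightarrow> x dvd y"
  using hom_dvd inv.hom_dvd[of "h x" "h y"] by auto

lemma eq_0_iff [simp]: "h x = 0 \<longleftrightarrow> x = 0"
  using hom_zero inv.hom_zero inv_h_h by (metis (no_types))

lemma is_unit_iff [simp]: "is_unit (h x) \<longleftrightarrow> is_unit x"
  using dvd_iff[of x 1] by (simp add: hom_one)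

lemma coprime_iff [simp]: "coprime (h x) (h y) \<longleftrightarrow> coprime x y"
proof
  assume "coprime (h x) (h y)"
  then show "coprime x y"
    by (auto intro!: coprimeI dest: coprime_common_divisor[of "h x" "h y" "h _"])
next
  assume "coprime x y"
  show "coprime (h x) (h y)"
  proof (rule coprimeI)
    fix c
    assume "c dvd h x" "c dvd h y"
    then have "inv h c dvd x" "inv h c dvd y"
      by (metis dvd_iff h_inv_h)+
    with \<open>coprime x y\<close> show "is_unit c"
      by (metis coprime_common_divisor h_inv_h is_unit_iff)
  qed
qed

lemma prime_elem_hom: "prime_elem x \<Longrightarrow> prime_elem (h x)"
proof (rule prime_elemI)
  assume x: "prime_elem x"
  then show "h x \<noteq> 0" "\<not> is_unit (h x)" by auto
  fix a b
  assume "h x dvd a * b"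
  then have "x dvd inv h a * inv h b"
    by (metis dvd_iff h_inv_h hom_mult)
  with x have "x dvd inv h a \<or> x dvd inv h b"
    by (rule prime_elem_dvd_multD)
  then show "h x dvd a \<or> h x dvd b"
    by (metis dvd_iff h_inv_h)
qed

end

lemma ring_aut_funpow:
  assumes "ring_aut h"
  shows "ring_aut (h ^^ n)"
  unfolding ring_aut_def ring_aut_axioms_def
proof (induction n)
  case 0
  show ?case using ring_hom_id bij_id by (simp only: funpow.simps)
next
  case (Suc n)
  with assms show ?case
    by (auto simp only: funpow.simps ring_aut_def ring_aut_axioms_def intro: ring_hom_comp bij_comp)
qed

context ring_aut
begin

lemma size_prime_factorization [simp]:
  "size (prime_factorization (h x)) = size (prime_factorization x)"
proof (induction x rule: prime_divisors_induct)
  case zero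
  show ?case by (simp add: hom_zero)
next
  case (unit x)
  then show ?case by (simp add: prime_factorization_unit)
next
  case (factor p x)
  have "prime (normalize (h p))"
    using factor(1) by (simp add: prime_elem_hom)
  then have "prime_factorization (h p) = {#normalize (h p)#}"
    by (metis prime_factorization_normalize prime_factorization_prime)
  with factor show ?case
    by (cases "x = 0") (simp_all add: hom_zero hom_mult prime_factorization_mult prime_factorization_prime)
qed

lemma coprime_funpow_funpow:
  assumes "\<And>m. coprime x ((h ^^ m) y)" and "\<And>m. coprime y ((h ^^ m) x)"
  shows "coprime ((h ^^ i) x) ((h ^^ j) y)"
proof (cases "i \<le> j")
  case True
  interpret hi: ring_aut "h ^^ i"
    using ring_aut_axioms by (rule ring_aut_funpow)
  have "(h ^^ j) y = (h ^^ i) ((h ^^ (j - i)) y)"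
    using True by (metis funpow_add le_add_diff_inverse o_apply)
  with assms(1) show ?thesis by simp
next
  case False
  interpret hj: ring_aut "h ^^ j"
    using ring_aut_axioms by (rule ring_aut_funpow)
  have "(h ^^ i) x = (h ^^ j) ((h ^^ (i - j)) x)"
    using False by (metis funpow_add le_add_diff_inverse nat_le_linear o_apply)
  with assms(2) show ?thesis by (simp add: coprime_commute)
qed

lemma funpow_eq_0_iff [simp]: "(h ^^ n) x = 0 \<longleftrightarrow> x = 0"
  using ring_aut.eq_0_iff[OF ring_aut_funpow[OF ring_aut_axioms]] .

lemma size_prime_factorization_funpow [simp]:
  "size (prime_factorization ((h ^^ n) x)) = size (prime_factorization x)"
  using ring_aut.size_prime_factorization[OF ring_aut_funpow[OF ring_aut_axioms]] .

lemma funpow_quotient_telescope: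
  assumes "a \<noteq> 0" "b \<noteq> 0" and shift: "h a * b * q = p * (h b * a)"
  shows "(h ^^ n) a * b * (\<Prod>i<n. (h ^^ i) q) = (\<Prod>i<n. (h ^^ i) p) * ((h ^^ n) b * a)"
proof (induction n)
  case 0
  show ?case by simp
next
  case (Suc n)
  interpret hn: ring_aut "h ^^ n"
    using ring_aut_axioms by (rule ring_aut_funpow)
  have shift_n: "(h ^^ Suc n) a * (h ^^ n) b * (h ^^ n) q = (h ^^ n) p * ((h ^^ Suc n) b * (h ^^ n) a)"
    using arg_cong[OF shift, of "h ^^ n"] by (simp add: hn.hom_mult funpow_swap1)
  have "((h ^^ n) a * (h ^^ n) b) * ((h ^^ Suc n) a * b * (\<Prod>i<Suc n. (h ^^ i) q))
      = ((h ^^ n) a * b * (\<Prod>i<n. (h ^^ i) q)) * ((h ^^ Suc n) a * (h ^^ n) b * (h ^^ n) q)"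
    by (simp add: ac_simps)
  also have "\<dots> = ((\<Prod>i<n. (h ^^ i) p) * ((h ^^ n) b * a)) * ((h ^^ n) p * ((h ^^ Suc n) b * (h ^^ n) a))"
    by (simp only: Suc.IH shift_n)
  also have "\<dots> = ((h ^^ n) a * (h ^^ n) b) * ((\<Prod>i<Suc n. (h ^^ i) p) * ((h ^^ Suc n) b * a))"
    by (simp add: ac_simps)
  finally show ?case
    using assms(1,2) by simp
qed

lemma is_unit_if_coprime_shifts:
  assumes "a \<noteq> 0" "b \<noteq> 0" "p \<noteq> 0"
    and shift: "h a * b * q = p * (h b * a)"
    and coprime: "\<And>i j. coprime ((h ^^ i) p) ((h ^^ j) q)"
  shows "is_unit p"
proof -
  let ?\<Omega> = "\<lambda>x. size (prime_factorization x)"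
  have bound: "n * ?\<Omega> p \<le> ?\<Omega> a + ?\<Omega> b" for n
  proof -
    let ?P = "\<Prod>i<n. (h ^^ i) p" and ?Q = "\<Prod>i<n. (h ^^ i) q"
    have "coprime ?P ?Q"
      using coprime by (intro prod_coprime_left prod_coprime_right)
    moreover have "?P dvd (h ^^ n) a * b * ?Q"
      using funpow_quotient_telescope[OF assms(1,2) shift] by (metis dvd_triv_left)
    ultimately have "?P dvd (h ^^ n) a * b"
      by (simp add: coprime_dvd_mult_left_iff)
    moreover have "?P \<noteq> 0" "(h ^^ n) a * b \<noteq> 0"
      using assms(1-3) by simp_all
    ultimately have "?\<Omega> ?P \<le> ?\<Omega> ((h ^^ n) a * b)"
      by (simp add: size_mset_mono flip: prime_factorization_subset_iff_dvd)
    moreover have "?\<Omega> ?P = n * ?\<Omega> p"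
      using assms(3) by (simp add: prime_factorization_prod)
    ultimately show ?thesis
      using assms(1,2) by (simp add: prime_factorization_mult)
  qed
  from bound[of "Suc (?\<Omega> a + ?\<Omega> b)"] have "?\<Omega> p = 0"
    by (cases "?\<Omega> p") simp_all
  with \<open>p \<noteq> 0\<close> show ?thesis
    by (simp add: prime_factorization_empty_iff)
qed

end

definition subst2 :: "('a::field_gcd \<Rightarrow> 'a) \<Rightarrow> 'a poly poly \<Rightarrow> 'a poly poly \<Rightarrow> 'a poly poly \<Rightarrow> 'a poly poly" where
  "subst2 s A B f = poly (map_poly (\<lambda>c. poly (map_poly (\<lambda>x. const2 (s x)) c) A) f) B"

lemma ring_hom_const2: "ring_hom const2"
  by unfold_locales (simp_all add: const2_def flip: one_pCons)

interpretation const2: ring_hom const2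
  by (rule ring_hom_const2)

lemma ring_hom_subst2:
  assumes "ring_hom s"
  shows "ring_hom (subst2 s A B)"
proof -
  have "ring_hom (\<lambda>x. const2 (s x))"
    using ring_hom_comp[OF ring_hom_const2 assms] by (simp add: o_def)
  then have "ring_hom (\<lambda>c. poly (map_poly (\<lambda>x. const2 (s x)) c) A)"
    using ring_hom_comp[OF ring_hom_poly ring_hom_map_poly] by (simp add: o_def)
  then show ?thesis
    unfolding subst2_def using ring_hom_comp[OF ring_hom_poly ring_hom_map_poly] by (simp add: o_def)
qed

lemma poly_eq_sum_atMost:
  fixes p :: "'a::comm_semiring_1 poly"
  assumes "degree p \<le> n"
  shows "poly p x = (\<Sum>i\<le>n. coeff p i * x ^ i)"
  unfolding poly_altdef using assms
  by (intro sum.mono_neutral_left) (auto simp: coeff_eq_0)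

lemma subst2_eq_sum:
  assumes "s 0 = 0"
  shows "subst2 s A B f = (\<Sum>j\<le>degree f. (\<Sum>i\<le>degree (coeff f j).
           const2 (s (coeff (coeff f j) i)) * A ^ i) * B ^ j)"
proof -
  let ?E = "\<lambda>c. poly (map_poly (\<lambda>x. const2 (s x)) c) A"
  have E: "?E c = (\<Sum>i\<le>degree c. const2 (s (coeff c i)) * A ^ i)" for c
    using assms by (simp add: poly_eq_sum_atMost[OF map_poly_degree_leq] coeff_map_poly const2.hom_zero)
  have "subst2 s A B f = (\<Sum>j\<le>degree f. coeff (map_poly ?E f) j * B ^ j)"
    unfolding subst2_def by (rule poly_eq_sum_atMost[OF map_poly_degree_leq])
  also have "\<dots> = (\<Sum>j\<le>degree f. ?E (coeff f j) * B ^ j)"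
    by (simp only: coeff_map_poly[of ?E] map_poly_0 poly_0)
  finally show ?thesis
    by (simp only: E)
qed

lemma sigma_pol_eq_subst2:
  "s 0 = 0 \<Longrightarrow> sigma_pol s u v = subst2 s var_beta (const2 u * var_alpha + const2 v * var_beta)"
  by (simp add: fun_eq_iff sigma_pol_def subst2_eq_sum)

lemma subst2_const2: "s 0 = 0 \<Longrightarrow> subst2 s A B (const2 x) = const2 (s x)"
  by (simp add: subst2_def const2_def map_poly_pCons)

lemma subst2_var_alpha: "ring_hom s \<Longrightarrow> subst2 s A B var_alpha = A"
  by (simp add: subst2_def var_alpha_def const2_def map_poly_pCons ring_hom.hom_zero ring_hom.hom_one
      flip: one_pCons)

lemma subst2_var_beta: "ring_hom s \<Longrightarrow> subst2 s A B var_beta = B"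
  by (simp add: subst2_def var_beta_def const2_def map_poly_pCons ring_hom.hom_zero ring_hom.hom_one
      flip: one_pCons)

lemma subst2_id: "subst2 (\<lambda>x. x) var_alpha var_beta f = f"
proof -
  have "poly (map_poly const2 c) var_alpha = [:c:]" for c :: "'a poly"
    by (induction c) (simp_all add: map_poly_pCons const2_def var_alpha_def)
  then show ?thesis
    by (simp add: subst2_def var_beta_def flip: pcompose_altdef)
qed

lemma subst2_subst2:
  assumes "ring_hom s" "ring_hom t"
  shows "subst2 s A B (subst2 t C D f) = subst2 (\<lambda>x. s (t x)) (subst2 s A B C) (subst2 s A B D) f"
proof -
  interpret s: ring_hom s by fact
  interpret t: ring_hom t by fact
  interpret S: ring_hom "subst2 s A B"
    using assms(1) by (rule ring_hom_subst2)
  have "subst2 s A B (subst2 t C D f) = subst2 s A B (\<Sum>j\<le>degree f. (\<Sum>i\<le>degree (coeff f j).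
           const2 (t (coeff (coeff f j) i)) * C ^ i) * D ^ j)"
    by (simp only: subst2_eq_sum[of t, OF t.hom_zero])
  also have "\<dots> = (\<Sum>j\<le>degree f. (\<Sum>i\<le>degree (coeff f j).
           const2 (s (t (coeff (coeff f j) i))) * subst2 s A B C ^ i) * subst2 s A B D ^ j)"
    by (simp add: S.hom_sum S.hom_mult S.hom_power subst2_const2 s.hom_zero)
  also have "\<dots> = subst2 (\<lambda>x. s (t x)) (subst2 s A B C) (subst2 s A B D) f"
    by (rule subst2_eq_sum[symmetric]) (simp add: s.hom_zero t.hom_zero)
  finally show ?thesis .
qed

lemma subst2_linear:
  assumes "ring_hom s"
  shows "subst2 s A B (const2 a * var_alpha + const2 b * var_beta) = const2 (s a) * A + const2 (s b) * B"
proof -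
  interpret ring_hom "subst2 s A B"
    using assms by (rule ring_hom_subst2)
  show ?thesis
    using assms by (simp add: hom_add hom_mult subst2_const2 subst2_var_alpha subst2_var_beta ring_hom.hom_zero)
qed

lemma ring_aut_sigma_pol:
  assumes "field_aut s" "u \<noteq> 0"
  shows "ring_aut (sigma_pol s u v)"
proof -
  have s: "ring_hom s" "bij s"
    using assms(1) unfolding field_aut_def by (simp_all add: ring_hom_def)
  define t where "t = inv s"
  have t: "ring_hom t"
    unfolding t_def using s by (rule ring_hom_inv)
  interpret s: ring_hom s by fact
  interpret t: ring_hom t by fact
  have st [simp]: "s (t x) = x" and ts [simp]: "t (s x) = x" for x
    unfolding t_def using s(2) by (simp_all add: bij_is_surj surj_f_inv_f bij_is_inj)
  define L where "L = const2 u * var_alpha + const2 v * var_beta"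
  \<comment> \<open>\<open>\<tau>\<close> inverts \<open>\<sigma>\<close>: it sends \<open>\<beta>\<close> to \<open>\<alpha>\<close> and \<open>\<alpha>\<close> to \<open>(\<beta> - t v * \<alpha>) / t u\<close>.\<close>
  define C where "C = const2 (t (- v / u)) * var_alpha + const2 (t (1 / u)) * var_beta"
  define \<sigma> where "\<sigma> = subst2 s var_beta L"
  define \<tau> where "\<tau> = subst2 t C var_alpha"
  have "\<sigma> C = const2 (- v / u) * var_beta + const2 (1 / u) * (const2 u * var_alpha + const2 v * var_beta)"
    unfolding \<sigma>_def C_def L_def using s(1) by (simp add: subst2_linear)
  also have "\<dots> = const2 (1 / u * u) * var_alpha + const2 (- v / u + 1 / u * v) * var_beta"
    by (simp only: const2.hom_mult const2.hom_add) (simp add: algebra_simps)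
  also have "\<dots> = var_alpha"
    using assms(2) by (simp add: const2.hom_one const2.hom_zero)
  finally have \<sigma>_C: "\<sigma> C = var_alpha" .
  have "\<tau> L = const2 (t u) * C + const2 (t v) * var_alpha"
    unfolding \<tau>_def L_def using t by (simp add: subst2_linear)
  also have "\<dots> = const2 (t (u * (- v / u) + v)) * var_alpha + const2 (t (u * (1 / u))) * var_beta"
    unfolding C_def by (simp only: t.hom_add t.hom_mult const2.hom_mult const2.hom_add) (simp add: algebra_simps)
  also have "\<dots> = var_beta"
    using assms(2) by (simp add: t.hom_zero t.hom_one const2.hom_one const2.hom_zero)
  finally have \<tau>_L: "\<tau> L = var_beta" .
  have "\<sigma> (\<tau> f) = f" for f
    using subst2_subst2[OF s(1) t, of var_beta L C var_alpha f] s(1)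
    by (simp add: \<sigma>_def \<tau>_def [symmetric] \<sigma>_C [unfolded \<sigma>_def] subst2_var_alpha subst2_id)
  moreover have "\<tau> (\<sigma> f) = f" for f
    using subst2_subst2[OF t s(1), of C var_alpha var_beta L f] t
    by (simp add: \<tau>_def \<sigma>_def [symmetric] \<tau>_L [unfolded \<tau>_def] subst2_var_beta subst2_id)
  ultimately have "bij \<sigma>"
    by (intro o_bij[of \<tau>]) (simp_all add: fun_eq_iff)
  moreover have "sigma_pol s u v = \<sigma>"
    unfolding \<sigma>_def L_def by (rule sigma_pol_eq_subst2) (rule s.hom_zero)
  ultimately show ?thesis
    using ring_hom_subst2[OF s(1)] by (simp add: ring_aut_def ring_aut_axioms_def \<sigma>_def)
qed

lemma tdeg_eq_0_iff_is_unit: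
  fixes x :: "'a::field_gcd poly poly"
  assumes "x \<noteq> 0"
  shows "tdeg x = 0 \<longleftrightarrow> is_unit x"
proof
  let ?S = "{degree (coeff x j) + j | j. j \<le> degree x \<and> coeff x j \<noteq> 0}"
  assume "tdeg x = 0"
  moreover have "finite ?S"
    by (rule finite_image_set) simp
  moreover have "degree (lead_coeff x) + degree x \<in> ?S"
    using assms by auto
  ultimately have "degree x = 0" "degree (coeff x 0) = 0"
    unfolding tdeg_def by (metis (no_types, lifting) Max_ge add_is_0 le_zero_eq)+
  with assms show "is_unit x"
    by (metis is_unit_poly_iff is_unit_const_poly_iff degree_0_id leading_coeff_0_iff
        dvd_field_iff)
next
  assume "is_unit x"
  then obtain c where "x = [:c:]" "is_unit c"
    by (auto simp: is_unit_poly_iff)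
  then obtain k where "x = [:[:k:]:]" "k \<noteq> 0"
    by (metis is_unit_poly_iff not_is_unit_0)
  then show "tdeg x = 0"
    by (simp add: tdeg_def)
qed

lemma not_in_spread_iff_coprime:
  assumes "p \<noteq> 0"
  shows "m \<notin> spread s u v p q \<longleftrightarrow> coprime p ((sigma_pol s u v ^^ m) q)"
  using assms by (simp add: spread_def tdeg_eq_0_iff_is_unit coprime_iff_gcd_eq_1)

lemma sigma_rat_Fract:
  assumes "field_aut s" "u \<noteq> 0" "b \<noteq> 0"
  shows "sigma_rat s u v (Fract a b) = Fract (sigma_pol s u v a) (sigma_pol s u v b)"
proof -
  interpret \<sigma>: ring_aut "sigma_pol s u v"
    using assms(1,2) by (rule ring_aut_sigma_pol)
  define ab where "ab = (SOME (a', b'). b' \<noteq> 0 \<and> Fract a b = Fract a' b')"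
  have "case ab of (a', b') \<Rightarrow> b' \<noteq> 0 \<and> Fract a b = Fract a' b'"
    unfolding ab_def by (rule someI_ex) (use assms(3) in auto)
  then obtain a' b' where ab: "ab = (a', b')" "b' \<noteq> 0" "a * b' = a' * b"
    using assms(3) by (cases ab) (auto simp: eq_fract)
  then have "sigma_pol s u v a * sigma_pol s u v b' = sigma_pol s u v a' * sigma_pol s u v b"
    by (metis \<sigma>.hom_mult)
  with ab assms(3) show ?thesis
    unfolding sigma_rat_def ab_def [symmetric] by (simp add: eq_fract)
qed

lemma shift_equation_of_sigma_rat_quotient:
  assumes "field_aut s" "u \<noteq> 0" "g \<noteq> 0" "q \<noteq> 0"
    and "sigma_rat s u v g / g = Fract p q"
  obtains a b where "a \<noteq> 0" "b \<noteq> 0" "sigma_pol s u v a * b * q = p * (sigma_pol s u v b * a)"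
proof -
  interpret \<sigma>: ring_aut "sigma_pol s u v"
    using assms(1,2) by (rule ring_aut_sigma_pol)
  obtain a b where g: "g = Fract a b" "b \<noteq> 0"
    by (cases g)
  with assms(3) have "a \<noteq> 0"
    by (auto simp: fract_collapse)
  have "Fract (sigma_pol s u v a * b) (sigma_pol s u v b * a) = Fract p q"
    using assms(5) by (simp add: g sigma_rat_Fract assms(1,2))
  with \<open>a \<noteq> 0\<close> g(2) assms(4) show ?thesis
    by (intro that[of a b]) (simp_all add: eq_fract)
qed

theorem theorem2p4:
  fixes s :: "'a::field_gcd \<Rightarrow> 'a" and u v :: 'a
    and g :: "'a poly poly fract" and p q :: "'a poly poly"
  assumes "field_aut s"
    and "u \<noteq> 0"
    and "g \<noteq> 0"
    and "p \<noteq> 0" and "q \<noteq> 0"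
    and "gcd p q = 1"
    and "sigma_rat s u v g / g = Fract p q"
  shows "(tdeg p = 0 \<and> tdeg q = 0) \<or> spread s u v p q \<union> spread s u v q p \<noteq> {}"
proof (rule disjCI)
  let ?\<sigma> = "sigma_pol s u v"
  interpret \<sigma>: ring_aut ?\<sigma>
    using assms(1,2) by (rule ring_aut_sigma_pol)
  assume "\<not> spread s u v p q \<union> spread s u v q p \<noteq> {}"
  then have "coprime p ((?\<sigma> ^^ m) q)" "coprime q ((?\<sigma> ^^ m) p)" for m
    using not_in_spread_iff_coprime assms(4,5) by blast+
  then have coprime: "coprime ((?\<sigma> ^^ i) p) ((?\<sigma> ^^ j) q)" for i j
    by (rule \<sigma>.coprime_funpow_funpow)
  obtain a b where "a \<noteq> 0" "b \<noteq> 0" and shift: "?\<sigma> a * b * q = p * (?\<sigma> b * a)"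
    using assms(1-3,5,7) by (rule shift_equation_of_sigma_rat_quotient)
  have "is_unit p"
    using \<open>a \<noteq> 0\<close> \<open>b \<noteq> 0\<close> assms(4) shift coprime by (rule \<sigma>.is_unit_if_coprime_shifts)
  moreover have "is_unit q"
    using \<open>b \<noteq> 0\<close> \<open>a \<noteq> 0\<close> assms(5)
  proof (rule \<sigma>.is_unit_if_coprime_shifts)
    show "?\<sigma> b * a * p = q * (?\<sigma> a * b)"
      using shift by (simp add: ac_simps)
    show "coprime ((?\<sigma> ^^ i) q) ((?\<sigma> ^^ j) p)" for i j
      using coprime coprime_commute by blast
  qed
  ultimately show "tdeg p = 0 \<and> tdeg q = 0"
    using assms(4,5) by (simp add: tdeg_eq_0_iff_is_unit)
qed

end
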